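(* Let $G=\mathrm{Spin}(2r+1)$ with $r\geqslant3$, let $\lambda\in\Lambda^+$ be such that $\alpha_r\notin\operatorname{Supp}(\lambda)$, and let $\lambda^{\mathrm{lb}}_{\mathrm{ad}}\in\mathrm{LB}(\lambda)$ be the adjoint little brother of $\lambda$, i.e. $\lambda^{\mathrm{lb}}_{\mathrm{ad}}=\lambda-(\alpha_p+\alpha_{p+1}+\cdots+\alpha_r)$ where $p=\max\{i<r:\alpha_i\in\operatorname{Supp}(\lambda)\}$ (assumed to exist). Then $\lambda^{\mathrm{lb}}_{\mathrm{ad}}\in\mathrm{LB}_G(\lambda)$.
   Context: $G=\mathrm{Spin}(2r+1)$ over an algebraically closed field of characteristic zero (simply connected, $\mathcal{X}(T)=\Lambda$), $T\subset B$ a maximal torus and Borel subgroup, $\Phi^+$ the positive roots, simple roots $\alpha_1,\dots,\alpha_r$ numbered as in Bourbaki (type $\mathsf{B}_r$, $\alpha_r$ the short simple root), $\Lambda^+$ the dominant weights. $\Pi^+(\lambda)=\{\mu\in\Lambda^+:\lambda-\mu\in\mathbb{N}[\Delta]\}$, $\Pi_G^+(\lambda)=\{\mu\in\Lambda^+:\lambda-\mu\in\mathbb{Q}_{\geq0}[\Delta]\}$; $\operatorname{Supp}(\lambda)=\{\alpha\in\Delta:\langle\lambda,\alpha^\vee\rangle\neq0\}$; $\Phi^+(\lambda)$ is the set of positive roots whose expression in simple roots involves some element of $\operatorname{Supp}(\lambda)$; $\nu\leqslant^\lambda_\mathbb{Q}\mu$ iff $\mu-\nu\in\mathbb{Q}_{\geq0}[\Phi^+(\lambda)]$.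 $\mathrm{LB}(\lambda)$ is the set of adjoint little brothers (here $\{\lambda^{\mathrm{lb}}_{\mathrm{ad}}\}$ when $\lambda\neq0$ and $\alpha_r\notin\operatorname{Supp}(\lambda)$), and $\mathrm{LB}_G(\lambda)$ is the set of elements of $(\Pi_G^+(\lambda)\smallsetminus\Pi^+(\lambda))\cup\mathrm{LB}(\lambda)$ maximal in this set w.r.t. $\leqslant^\lambda_\mathbb{Q}$. *)

theory Defs
  imports Complex_Main
begin

text \<open>Root datum of type B_r (G = Spin(2r+1), simply connected, so the character
lattice is the full weight lattice).  A (rational) weight is encoded by its
coordinates with respect to the simple roots alpha_1, ..., alpha_r (Bourbaki
numbering, alpha_r short): a function nat => rat vanishing outside 1..r.\<close>

definition supported :: "nat \<Rightarrow> (nat \<Rightarrow> rat) \<Rightarrow> bool" where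
  "supported r \<mu> \<longleftrightarrow> (\<forall>i. i \<notin> {1..r} \<longrightarrow> \<mu> i = 0)"

text \<open>Cartan integers  cartanB r i j = <alpha_i, alpha_j^vee>.\<close>
definition cartanB :: "nat \<Rightarrow> nat \<Rightarrow> nat \<Rightarrow> rat" where
  "cartanB r i j =
     (if i = j then 2
      else if j = i + 1 \<or> i = j + 1 then (if i + 1 = r \<and> j = r then -2 else -1)
      else 0)"

definition pairing :: "nat \<Rightarrow> (nat \<Rightarrow> rat) \<Rightarrow> nat \<Rightarrow> rat" where
  "pairing r \<mu> j = (\<Sum>i=1..r. \<mu> i * cartanB r i j)"

definition is_weight :: "nat \<Rightarrow> (nat \<Rightarrow> rat) \<Rightarrow> bool" where
  "is_weight r \<mu> \<longleftrightarrow> supported r \<mu> \<and> (\<forall>j\<in>{1..r}. pairing r \<mu> j \<in> \<int>)"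

definition dominant :: "nat \<Rightarrow> (nat \<Rightarrow> rat) \<Rightarrow> bool" where
  "dominant r \<mu> \<longleftrightarrow> is_weight r \<mu> \<and> (\<forall>j\<in>{1..r}. pairing r \<mu> j \<ge> 0)"

definition Supp :: "nat \<Rightarrow> (nat \<Rightarrow> rat) \<Rightarrow> nat set" where
  "Supp r la = {j \<in> {1..r}. pairing r la j \<noteq> 0}"

text \<open>Indicator of the interval [a,b]: the coordinates of alpha_a + ... + alpha_b.\<close>
definition ind :: "nat \<Rightarrow> nat \<Rightarrow> nat \<Rightarrow> rat" where
  "ind a b k = (if a \<le> k \<and> k \<le> b then 1 else 0)"

text \<open>Positive roots of B_r in simple-root coordinates:
  e_i - e_j = alpha_i + ... + alpha_(j-1),  e_i = alpha_i + ... + alpha_r,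
  e_i + e_j = alpha_i + ... + alpha_(j-1) + 2(alpha_j + ... + alpha_r).\<close>
definition pos_roots :: "nat \<Rightarrow> (nat \<Rightarrow> rat) set" where
  "pos_roots r =
     {ind i (j - 1) | i j. 1 \<le> i \<and> i < j \<and> j \<le> r}
   \<union> {ind i r | i. 1 \<le> i \<and> i \<le> r}
   \<union> {(%k. ind i (j - 1) k + 2 * ind j r k) | i j. 1 \<le> i \<and> i < j \<and> j \<le> r}"

definition pos_roots_lam :: "nat \<Rightarrow> (nat \<Rightarrow> rat) \<Rightarrow> (nat \<Rightarrow> rat) set" where
  "pos_roots_lam r la = {\<beta> \<in> pos_roots r. \<exists>i\<in>Supp r la. \<beta> i \<noteq> 0}"

definition leQ :: "nat \<Rightarrow> (nat \<Rightarrow> rat) \<Rightarrow> (nat \<Rightarrow> rat) \<Rightarrow> (nat \<Rightarrow> rat) \<Rightarrow> bool" where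
  "leQ r la \<nu> \<mu> \<longleftrightarrow>
     (\<exists>c :: (nat \<Rightarrow> rat) \<Rightarrow> rat. (\<forall>\<beta>\<in>pos_roots_lam r la. c \<beta> \<ge> 0) \<and>
        (\<forall>k. \<mu> k - \<nu> k = (\<Sum>\<beta>\<in>pos_roots_lam r la. c \<beta> * \<beta> k)))"

definition Pi_plus :: "nat \<Rightarrow> (nat \<Rightarrow> rat) \<Rightarrow> (nat \<Rightarrow> rat) set" where
  "Pi_plus r la = {\<mu>. dominant r \<mu> \<and> (\<forall>i. la i - \<mu> i \<in> \<nat>)}"

definition Pi_plus_G :: "nat \<Rightarrow> (nat \<Rightarrow> rat) \<Rightarrow> (nat \<Rightarrow> rat) set" where
  "Pi_plus_G r la = {\<mu>. dominant r \<mu> \<and> (\<forall>i. la i - \<mu> i \<ge> 0)}"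

text \<open>LB_G(lambda), given the set LB = LB(lambda) of adjoint little brothers:
  the maximal elements of (Pi^+_G(lambda) - Pi^+(lambda)) \<union> LB w.r.t. <=^lambda_Q.\<close>
definition LB_G :: "nat \<Rightarrow> (nat \<Rightarrow> rat) \<Rightarrow> (nat \<Rightarrow> rat) set \<Rightarrow> (nat \<Rightarrow> rat) set" where
  "LB_G r la LB =
     (let S = (Pi_plus_G r la - Pi_plus r la) \<union> LB in
      {\<nu> \<in> S. \<forall>\<mu>\<in>S. leQ r la \<nu> \<mu> \<longrightarrow> \<mu> = \<nu>})"

definition lb_ad :: "nat \<Rightarrow> (nat \<Rightarrow> rat) \<Rightarrow> (nat \<Rightarrow> rat)" where
  "lb_ad r la = (let p = Max {i \<in> Supp r la. i < r} in (%k. la k - ind p r k))"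

end

theory Submission
  imports Defs
begin

text \<open>Suppose mu in Pi+_G(lambda) lies above the little brother lambda - (alpha_p + ... + alpha_r)
  in the order of Q_{>=0}[Phi+(lambda)] but is different from it. Positive roots have
  nonnegative coordinates, so y = lambda - mu satisfies 0 <= y <= alpha_p + ... + alpha_r
  coordinatewise. Every pairing <y, alpha_j^vee> is an integer, and it is nonpositive for j > p
  because lambda is orthogonal to the coroots of alpha_(p+1), ..., alpha_r. Through the
  tridiagonal Cartan matrix this says that the successive differences of y on [p, r] are
  nondecreasing, nonpositive, congruent to each other modulo Z and have integral doubles.
  Together with 0 <= y <= 1 and r >= 3 this forces y to be integral, that is mu in Pi+(lambda).\<close>

lemma Ints_diff_of_Suc_steps:
  fixes f :: "nat \<Rightarrow> 'a::ring_1"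
  assumes "\<And>j. m \<le> j \<Longrightarrow> j < n \<Longrightarrow> f (Suc j) - f j \<in> \<int>" and "m \<le> k" and "k \<le> n"
  shows "f k - f m \<in> \<int>"
  using \<open>m \<le> k\<close> \<open>k \<le> n\<close>
proof (induction k rule: dec_induct)
  case (step j)
  then have "(f (Suc j) - f j) + (f j - f m) \<in> \<int>"
    using assms(1) by (intro Ints_add) simp_all
  then show ?case by simp
qed simp

lemma le_of_Suc_mono_on_interval:
  fixes f :: "nat \<Rightarrow> 'a::order"
  assumes "\<And>j. m \<le> j \<Longrightarrow> j < n \<Longrightarrow> f j \<le> f (Suc j)" and "m \<le> k" and "k \<le> n"
  shows "f k \<le> f n"
  using \<open>k \<le> n\<close> \<open>m \<le> k\<close>
proof (induction k rule: inc_induct)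
  case (step j)
  have "f j \<le> f (Suc j)" using assms(1) step.prems step.hyps(2) by simp
  also have "\<dots> \<le> f n" using step.IH step.prems by simp
  finally show ?case .
qed simp

lemma nonpos_half_integer_le:
  fixes x :: rat
  assumes "x \<le> 0" and "2 * x \<in> \<int>" and "x \<notin> \<int>"
  shows "x \<le> -1/2"
proof -
  obtain n where n: "2 * x = of_int n" using \<open>2 * x \<in> \<int>\<close> by (auto elim: Ints_cases)
  have "n \<le> 0" using n \<open>x \<le> 0\<close> by simp
  moreover have "n \<noteq> 0" using n \<open>x \<notin> \<int>\<close> by auto
  ultimately have "of_int n \<le> (-1 :: rat)" by simp
  with n show ?thesis by simp
qed

lemma pairing_diff: "pairing r (\<lambda>k. f k - g k) j = pairing r f j - pairing r g j"
  unfolding pairing_def by (simp add: left_diff_distrib sum_subtractf)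

lemma pairing_tridiagonal:
  assumes "y 0 = 0" and "y (Suc r) = 0" and "1 \<le> j" and "j \<le> r"
  shows "pairing r y j = 2 * y j - (if j = r then 2 else 1) * y (j - 1) - y (j + 1)"
proof -
  have "{0..Suc r} = insert 0 (insert (Suc r) {1..r})" by auto
  then have "pairing r y j = (\<Sum>i\<in>{0..Suc r}. y i * cartanB r i j)"
    unfolding pairing_def using assms by simp
  also have "\<dots> = (\<Sum>i\<in>{j - 1, j, j + 1}. y i * cartanB r i j)"
    by (rule sum.mono_neutral_right) (use assms in \<open>auto simp: cartanB_def\<close>)
  also have "\<dots> = y (j - 1) * cartanB r (j - 1) j + y j * cartanB r j j + y (j + 1) * cartanB r (j + 1) j"
  proof -
    have "j - 1 \<notin> {j, j + 1}" and "j \<notin> {j + 1}" using assms by auto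
    then show ?thesis by (simp add: add.assoc)
  qed
  also have "\<dots> = 2 * y j - (if j = r then 2 else 1) * y (j - 1) - y (j + 1)"
    using assms by (cases "j = 1") (auto simp: cartanB_def)
  finally show ?thesis .
qed

lemma steps_nonpos_half_integral_congruent:
  fixes y :: "nat \<Rightarrow> rat"
  assumes "1 \<le> p" and "p < r" and "y 0 = 0" and "y (Suc r) = 0"
    and pairing_int: "\<And>j. j \<in> {1..r} \<Longrightarrow> pairing r y j \<in> \<int>"
    and pairing_nonpos: "\<And>j. p < j \<Longrightarrow> j \<le> r \<Longrightarrow> pairing r y j \<le> 0"
  defines "b j \<equiv> y (Suc j) - y j"
  assumes range: "p \<le> i" "i \<le> j" "j < r"
  shows "b j \<le> 0" and "2 * b j \<in> \<int>" and "b j - b i \<in> \<int>"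
proof -
  note pairing_y = pairing_tridiagonal[OF \<open>y 0 = 0\<close> \<open>y (Suc r) = 0\<close>]
  have pairing_mid: "pairing r y (Suc k) = b k - b (Suc k)" if "Suc k < r" for k
    using pairing_y[of "Suc k"] that by (simp add: b_def)
  have pairing_last: "pairing r y r = 2 * b (r - 1)"
  proof -
    have "Suc (r - 1) = r" using \<open>p < r\<close> by simp
    then show ?thesis using pairing_y[of r] \<open>1 \<le> p\<close> \<open>p < r\<close> \<open>y (Suc r) = 0\<close> by (simp add: b_def)
  qed
  have step_int: "b (Suc k) - b k \<in> \<int>" if "p \<le> k" "k < r - 1" for k
  proof -
    have "- pairing r y (Suc k) \<in> \<int>" using pairing_int[of "Suc k"] that by simp
    then show ?thesis using pairing_mid[of k] that by simp
  qed
  have step_mono: "b k \<le> b (Suc k)" if "p \<le> k" "k < r - 1" for k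
    using pairing_nonpos[of "Suc k"] pairing_mid[of k] that by simp
  have congruent: "b l - b k \<in> \<int>" if "p \<le> k" "k \<le> l" "l \<le> r - 1" for k l
    using Ints_diff_of_Suc_steps[of k "r - 1" b l] step_int that by simp
  have "b (r - 1) \<le> 0" using pairing_nonpos[of r] pairing_last \<open>p < r\<close> by simp
  then show "b j \<le> 0"
    using le_of_Suc_mono_on_interval[of p "r - 1" b j] step_mono range by fastforce
  have "2 * b (r - 1) \<in> \<int>" using pairing_int[of r] pairing_last \<open>p < r\<close> by simp
  moreover have "b (r - 1) - b j \<in> \<int>" using congruent[of j "r - 1"] range by simp
  ultimately have "2 * b (r - 1) - 2 * (b (r - 1) - b j) \<in> \<int>"
    by (metis Ints_diff Ints_mult Ints_numeral)
  then show "2 * b j \<in> \<int>" by (simp add: algebra_simps)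
  show "b j - b i \<in> \<int>" using congruent[of i j] range by simp
qed

lemma Ints_coords_below_short_root:
  fixes y :: "nat \<Rightarrow> rat"
  assumes "3 \<le> r" and "1 \<le> p" and "p < r"
    and nonneg: "\<And>k. 0 \<le> y k" and below: "\<And>k. y k \<le> ind p r k"
    and pairing_int: "\<And>j. j \<in> {1..r} \<Longrightarrow> pairing r y j \<in> \<int>"
    and pairing_nonpos: "\<And>j. p < j \<Longrightarrow> j \<le> r \<Longrightarrow> pairing r y j \<le> 0"
  shows "y k \<in> \<int>"
proof -
  have outside: "y k = 0" if "k < p \<or> r < k" for k
    using nonneg[of k] below[of k] that by (auto simp: ind_def)
  have "y 0 = 0" and "y (Suc r) = 0" using outside \<open>1 \<le> p\<close> by auto
  note pairing_y = pairing_tridiagonal[OF this]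
  define b where "b j = y (Suc j) - y j" for j
  note steps = steps_nonpos_half_integral_congruent[OF \<open>1 \<le> p\<close> \<open>p < r\<close> \<open>y 0 = 0\<close>
      \<open>y (Suc r) = 0\<close> pairing_int pairing_nonpos, folded b_def]
  have "pairing r y p = y p - b p"
    using pairing_y[of p] outside[of "p - 1"] \<open>1 \<le> p\<close> \<open>p < r\<close> by (simp add: b_def)
  then have yp_minus_bp: "y p - b p \<in> \<int>" using pairing_int[of p] \<open>1 \<le> p\<close> \<open>p < r\<close> by simp
  have yp_int: "y p \<in> \<int>"
  proof (cases "p = 1")
    case False
    then have "pairing r y (p - 1) = - y p"
      using pairing_y[of "p - 1"] outside[of "p - 1"] outside[of "p - 1 - 1"] \<open>1 \<le> p\<close> \<open>p < r\<close>
      by simp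
    moreover have "p - 1 \<in> {1..r}" using False \<open>1 \<le> p\<close> \<open>p < r\<close> by auto
    ultimately show ?thesis using pairing_int by fastforce
  next
    case True
    \<comment> \<open>Otherwise b 1 and b 2 are non-integral half-integers \<le> 0, so y 3 \<ge> 0 forces y 1 = 1.\<close>
    show ?thesis
    proof (rule ccontr)
      assume "y p \<notin> \<int>"
      then have "b 1 \<notin> \<int>" using yp_minus_bp True by auto
      moreover have "b 2 - b 1 \<in> \<int>" using steps(3)[of 1 2] True \<open>3 \<le> r\<close> by simp
      ultimately have "b 2 \<notin> \<int>" by auto
      have "b 1 \<le> -1/2" and "b 2 \<le> -1/2"
        using nonpos_half_integer_le steps(1,2)[of 1 1] steps(1,2)[of 1 2]
          \<open>b 1 \<notin> \<int>\<close> \<open>b 2 \<notin> \<int>\<close> True \<open>3 \<le> r\<close> by simp_all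
      moreover have "y 3 = y 1 + b 1 + b 2" by (simp add: b_def numeral_3_eq_3 numeral_2_eq_2)
      ultimately have "1 \<le> y 1" using nonneg[of 3] by linarith
      then have "y 1 = 1" using below[of 1] True \<open>p < r\<close> by (simp add: ind_def)
      then show False using \<open>y p \<notin> \<int>\<close> True by simp
    qed
  qed
  have "b j \<in> \<int>" if "p \<le> j" "j < r" for j
    using steps(3)[of p j] yp_minus_bp yp_int that by simp
  then have "y j - y p \<in> \<int>" if "p \<le> j" "j \<le> r" for j
    using Ints_diff_of_Suc_steps[of p r y j] that by (simp add: b_def)
  then show ?thesis using yp_int outside[of k] by (cases "p \<le> k \<and> k \<le> r") auto
qed

lemma pos_roots_nonneg: "\<beta> \<in> pos_roots r \<Longrightarrow> 0 \<le> \<beta> k"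
  unfolding pos_roots_def ind_def by auto

lemma leQ_imp_le:
  assumes "leQ r la \<nu> \<mu>"
  shows "\<nu> k \<le> \<mu> k"
proof -
  obtain c where "\<forall>\<beta>\<in>pos_roots_lam r la. 0 \<le> c \<beta>"
    and "\<forall>k. \<mu> k - \<nu> k = (\<Sum>\<beta>\<in>pos_roots_lam r la. c \<beta> * \<beta> k)"
    using assms unfolding leQ_def by blast
  then have "0 \<le> \<mu> k - \<nu> k"
    by (auto intro!: sum_nonneg simp: pos_roots_lam_def pos_roots_nonneg)
  then show ?thesis by simp
qed

lemma pairing_eq_0_above_Max_Supp:
  assumes "r \<notin> Supp r la" and "Max {i \<in> Supp r la. i < r} < j" and "j \<le> r"
  shows "pairing r la j = 0"
proof (rule ccontr)
  assume "pairing r la j \<noteq> 0"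
  moreover have "1 \<le> j" using assms(2) by linarith
  ultimately have "j \<in> Supp r la" using \<open>j \<le> r\<close> by (simp add: Supp_def)
  with assms(1) \<open>j \<le> r\<close> have "j \<in> {i \<in> Supp r la. i < r}" by (auto simp: order.order_iff_strict)
  moreover have "finite {i \<in> Supp r la. i < r}" by simp
  ultimately show False using assms(2) by (simp add: Max_ge leD)
qed

lemma Pi_plus_G_above_lb_in_Pi_plus:
  assumes "3 \<le> r" and "1 \<le> p" and "p < r" and "dominant r la"
    and orthogonal: "\<And>j. p < j \<Longrightarrow> j \<le> r \<Longrightarrow> pairing r la j = 0"
    and "\<mu> \<in> Pi_plus_G r la" and above: "\<And>k. la k - ind p r k \<le> \<mu> k"
  shows "\<mu> \<in> Pi_plus r la"
proof -
  have dom: "dominant r \<mu>" and below_la: "\<And>k. 0 \<le> la k - \<mu> k"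
    using \<open>\<mu> \<in> Pi_plus_G r la\<close> by (auto simp: Pi_plus_G_def)
  define y where "y k = la k - \<mu> k" for k
  have pairing_y: "pairing r y j = pairing r la j - pairing r \<mu> j" for j
    unfolding y_def[abs_def] by (rule pairing_diff)
  have "y k \<in> \<int>" for k
  proof (rule Ints_coords_below_short_root[OF \<open>3 \<le> r\<close> \<open>1 \<le> p\<close> \<open>p < r\<close>])
    show "0 \<le> y k" for k using below_la by (simp add: y_def)
    show "y k \<le> ind p r k" for k using above[of k] by (simp add: y_def)
    show "pairing r y j \<in> \<int>" if "j \<in> {1..r}" for j
      using \<open>dominant r la\<close> dom that by (simp add: pairing_y dominant_def is_weight_def)
    show "pairing r y j \<le> 0" if "p < j" "j \<le> r" for j
      using dom orthogonal[OF that] that \<open>1 \<le> p\<close> by (simp add: pairing_y dominant_def)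
  qed
  then show ?thesis using dom below_la by (simp add: Pi_plus_def Nats_altdef2 y_def)
qed

theorem proposition2p16:
  fixes r :: nat and la :: "nat \<Rightarrow> rat"
  assumes "r \<ge> 3"
    and "dominant r la"
    and "r \<notin> Supp r la"
    and "\<exists>i\<in>Supp r la. i < r"
  shows "lb_ad r la \<in> LB_G r la {lb_ad r la}"
proof -
  define p where "p = Max {i \<in> Supp r la. i < r}"
  have "p \<in> {i \<in> Supp r la. i < r}"
    unfolding p_def using assms(4) by (intro Max_in) (auto simp: Supp_def)
  then have "1 \<le> p" and "p < r" by (auto simp: Supp_def)
  have lb_ad: "lb_ad r la = (\<lambda>k. la k - ind p r k)"
    by (simp add: lb_ad_def p_def)
  have "\<mu> = lb_ad r la"
    if "\<mu> \<in> (Pi_plus_G r la - Pi_plus r la) \<union> {lb_ad r la}" and "leQ r la (lb_ad r la) \<mu>" for \<mu>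
  proof (rule ccontr)
    assume "\<mu> \<noteq> lb_ad r la"
    with that(1) have "\<mu> \<in> Pi_plus_G r la" and "\<mu> \<notin> Pi_plus r la" by auto
    moreover have "\<mu> \<in> Pi_plus r la"
      using Pi_plus_G_above_lb_in_Pi_plus[OF assms(1) \<open>1 \<le> p\<close> \<open>p < r\<close> assms(2)]
        pairing_eq_0_above_Max_Supp[OF assms(3)] \<open>\<mu> \<in> Pi_plus_G r la\<close> leQ_imp_le[OF that(2)]
      by (simp add: lb_ad p_def)
    ultimately show False by simp
  qed
  then show ?thesis unfolding LB_G_def Let_def by auto
qed

end
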